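(* Let $d$ be a positive integer, $d < q \le \infty$, and let $p = q/(q-d)$ (with $p=1$ if $q=\infty$). Let $\mathbf{a} = (a_j)_{j=1}^\infty\in\ell^p$ and $M>0$. Let $X_{q,M} = \{\mathbf{x}\in\ell^q : \|\mathbf{x}\|_q\le M\}$, viewed as a subspace of $\Omega$, where $\Omega = \prod_{j=1}^\infty[-M,M]$ in the real case and $\Omega=\prod_{j=1}^\infty\{x\in\mathbb{C}:|x|\le M\}$ in the complex case, with the product topology. Then the function $f_d$ on $X_{q,M}$ defined by \[ f_d(\mathbf{x}) = (\mathbf{a},\mathbf{x}^d) = \sum_{j=1}^\infty a_j x_j^d \] is continuous with respect to the subspace topology on $X_{q,M}$ induced by the product topology on $\Omega$.
   Context: $\ell^p$ ($1\le p<\infty$) denotes sequences with $\|\mathbf{a}\|_p=(\sum_j|a_j|^p)^{1/p}<\infty$, and $\ell^\infty$ bounded sequences with the sup norm. Sequences and coefficients are real in the real case and complex in the complex case. The series defining $f_d$ converges absolutely by Hölder's inequality since $\mathbf{x}^d=(x_j^d)\in\ell^{q/d}$ and $(p,q/d)$ is a conjugate pair. *)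

theory Defs
  imports "HOL-Analysis.Analysis"
begin

text \<open>Membership in the sequence space l^q, for 1 \<le> q \<le> \<infinity> (q :: ereal).
  Sequences are indexed by nat (index 0 plays the role of index 1).\<close>
definition in_lq :: "ereal \<Rightarrow> (nat \<Rightarrow> 'a::real_normed_vector) \<Rightarrow> bool" where
  "in_lq q x = (if q = \<infinity> then bounded (range x)
                else summable (\<lambda>j. norm (x j) powr real_of_ereal q))"

definition lq_norm :: "ereal \<Rightarrow> (nat \<Rightarrow> 'a::real_normed_vector) \<Rightarrow> real" where
  "lq_norm q x = (if q = \<infinity> then (SUP j. norm (x j))
                  else (\<Sum>j. norm (x j) powr real_of_ereal q) powr (1 / real_of_ereal q))"

definition conj_exp :: "nat \<Rightarrow> ereal \<Rightarrow> ereal" where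
  "conj_exp d q = (if q = \<infinity> then 1
                   else ereal (real_of_ereal q / (real_of_ereal q - real d)))"

definition Xball :: "ereal \<Rightarrow> real \<Rightarrow> (nat \<Rightarrow> 'a::real_normed_vector) set" where
  "Xball q M = {x. in_lq q x \<and> lq_norm q x \<le> M}"

definition Omega :: "real \<Rightarrow> (nat \<Rightarrow> 'a::real_normed_vector) set" where
  "Omega M = {x. \<forall>j. norm (x j) \<le> M}"

end

theory Submission
  imports Defs
begin

text \<open>The partial sums \<open>\<Sum>j<n. a j * x j ^ d\<close> depend on finitely many coordinates, so they
  are continuous for the product topology, and it suffices to show that they converge uniformly
  on \<open>X\<^sub>q\<^sub>,\<^sub>M\<close>. For \<open>q = \<infinity>\<close> this is the Weierstrass M-test with majorant \<open>M\<^sup>d \<bar>a\<^sub>j\<bar>\<close>.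
  For \<open>q < \<infinity>\<close>, Young's inequality with a weight \<open>c > 0\<close> gives
  \<open>\<bar>a\<^sub>j\<bar> \<bar>x\<^sub>j\<bar>\<^sup>d \<le> c \<bar>x\<^sub>j\<bar>\<^sup>q + C(c) \<bar>a\<^sub>j\<bar>\<^sup>p\<close>, so every block of the series is bounded by \<open>c M\<^sup>q\<close>
  plus \<open>C(c)\<close> times a block of the convergent series \<open>\<Sum> \<bar>a\<^sub>j\<bar>\<^sup>p\<close>, uniformly in \<open>x\<close>:
  first choose \<open>c\<close>, then the block far enough out.\<close>

lemma norm_le_lq_norm:
  fixes x :: "nat \<Rightarrow> 'a::real_normed_vector"
  assumes "0 < q" and "in_lq q x"
  shows "norm (x j) \<le> lq_norm q x"
proof (cases q)
  case PInf
  then have "bdd_above (range (\<lambda>j. norm (x j)))"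
    using assms(2) by (auto simp: in_lq_def bounded_iff bdd_above_def)
  then show ?thesis
    using PInf cSUP_upper[of j UNIV] by (simp add: lq_norm_def)
next
  case (real Q)
  with assms have "Q > 0" and summ: "summable (\<lambda>j. norm (x j) powr Q)"
    by (auto simp: in_lq_def)
  have "norm (x j) = (norm (x j) powr Q) powr (1 / Q)"
    using \<open>Q > 0\<close> by (simp add: powr_powr)
  also have "\<dots> \<le> (\<Sum>j. norm (x j) powr Q) powr (1 / Q)"
    using \<open>Q > 0\<close> sum_le_suminf[OF summ, of "{j}"] by (intro powr_mono2) auto
  finally show ?thesis
    using real by (simp add: lq_norm_def)
qed (use assms in simp)

lemma Xball_subset_Omega:
  assumes "0 < q"
  shows "Xball q M \<subseteq> (Omega M :: (nat \<Rightarrow> 'a::real_normed_vector) set)"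
  unfolding Xball_def Omega_def using norm_le_lq_norm[OF assms] order_trans by blast

lemma suminf_powr_eq_lq_norm_powr:
  fixes x :: "nat \<Rightarrow> 'a::real_normed_vector"
  assumes "0 < Q" and "in_lq (ereal Q) x"
  shows "(\<Sum>j. norm (x j) powr Q) = lq_norm (ereal Q) x powr Q"
proof -
  have "0 \<le> (\<Sum>j. norm (x j) powr Q)"
    using assms by (intro suminf_nonneg) (auto simp: in_lq_def)
  then show ?thesis
    using assms by (simp add: lq_norm_def powr_powr)
qed

lemma mult_power_le_Young:
  fixes \<alpha> \<beta> c Q :: real and d :: nat
  assumes "0 \<le> \<alpha>" "0 \<le> \<beta>" "0 < c" "0 < d" "real d < Q"
  shows "\<alpha> * \<beta> ^ d \<le> c * \<beta> powr Q + c powr (- real d / (Q - d)) * \<alpha> powr (Q / (Q - d))"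
proof -
  have rhs_nonneg: "0 \<le> c * \<beta> powr Q" "0 \<le> c powr (- real d / (Q - d)) * \<alpha> powr (Q / (Q - d))"
    using assms by simp_all
  show ?thesis
  proof (cases "\<beta> = 0")
    case True
    then show ?thesis using assms rhs_nonneg by (simp add: power_0_left)
  next
    case False
    then have "\<beta> > 0" using assms by simp
    then have \<beta>_pow: "\<beta> ^ d = \<beta> powr d"
      by (simp add: powr_realpow)
    show ?thesis
    proof (cases "\<alpha> \<le> c * \<beta> powr (Q - d)")
      case True
      then have "\<alpha> * \<beta> ^ d \<le> c * \<beta> powr (Q - d) * \<beta> powr d"
        using \<beta>_pow \<open>\<beta> > 0\<close> by (simp add: mult_right_mono)
      also have "\<dots> = c * \<beta> powr Q"
        by (simp add: mult.assoc flip: powr_add)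
      finally show ?thesis using rhs_nonneg by linarith
    next
      case False
      have "0 \<le> c * \<beta> powr (Q - d)"
        using assms by simp
      with False have "\<alpha> > 0"
        by linarith
      from False have "\<beta> powr (Q - d) < \<alpha> / c"
        using assms by (simp add: field_simps)
      then have "(\<beta> powr (Q - d)) powr (d / (Q - d)) < (\<alpha> / c) powr (d / (Q - d))"
        using assms by (intro powr_less_mono2) auto
      then have "\<beta> ^ d < c powr (- real d / (Q - d)) * \<alpha> powr (d / (Q - d))"
        using assms \<open>\<beta> > 0\<close> \<beta>_pow
        by (simp add: powr_powr powr_divide powr_minus divide_simps)
      then have "\<alpha> * \<beta> ^ d \<le> c powr (- real d / (Q - d)) * (\<alpha> * \<alpha> powr (d / (Q - d)))"
        using \<open>\<alpha> > 0\<close> by (simp add: mult_left_mono mult.left_commute)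
      also have "\<alpha> * \<alpha> powr (d / (Q - d)) = \<alpha> powr (1 + d / (Q - d))"
        using \<open>\<alpha> > 0\<close> by (simp add: powr_add)
      also have "1 + d / (Q - d) = Q / (Q - d)"
        using assms by (simp add: field_simps)
      finally show ?thesis using rhs_nonneg by linarith
    qed
  qed
qed

text \<open>A Weierstrass M-test up to a remainder \<open>c * h x k\<close> whose weight \<open>c\<close> can be made
  arbitrarily small, at the price of a larger multiple \<open>T\<close> of the majorant \<open>g\<close>.\<close>

lemma uniform_limit_suminf_dominated:
  fixes f :: "nat \<Rightarrow> 'a::topological_space \<Rightarrow> 'b::banach"
  assumes "summable g"
    and h_bounded: "\<And>x m n. x \<in> S \<Longrightarrow> (\<Sum>k=m..<n. h x k) \<le> B"
    and dominated: "\<And>c. c > 0 \<Longrightarrow> \<exists>T. \<forall>x\<in>S. \<forall>k. norm (f k x) \<le> T * g k + c * h x k"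
  shows "uniform_limit S (\<lambda>n x. \<Sum>k<n. f k x) (\<lambda>x. \<Sum>k. f k x) sequentially"
proof (rule uniform_limit_suminf)
  show "uniformly_convergent_on S (\<lambda>n x. \<Sum>k<n. f k x)"
    unfolding uniformly_convergent_on_sum_iff
  proof (intro allI impI)
    fix \<epsilon> :: real
    assume "\<epsilon> > 0"
    define c where "c = \<epsilon> / 2 / (\<bar>B\<bar> + 1)"
    have "c > 0" and "c * B < \<epsilon> / 2"
      using \<open>\<epsilon> > 0\<close> by (simp_all add: c_def pos_divide_less_eq mult_strict_left_mono)
    obtain T where T: "\<And>x k. x \<in> S \<Longrightarrow> norm (f k x) \<le> T * g k + c * h x k"
      using dominated[OF \<open>c > 0\<close>] by blast
    have "\<epsilon> / (2 * (\<bar>T\<bar> + 1)) > 0"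
      using \<open>\<epsilon> > 0\<close> by (intro divide_pos_pos) auto
    then obtain N where N: "\<And>m n. m \<ge> N \<Longrightarrow> norm (\<Sum>k=m..<n. g k) < \<epsilon> / (2 * (\<bar>T\<bar> + 1))"
      using \<open>summable g\<close> unfolding summable_Cauchy by blast
    have "norm (\<Sum>k=m..<n. f k x) < \<epsilon>" if "N \<le> m" and "x \<in> S" for m n x
    proof -
      have "T * (\<Sum>k=m..<n. g k) \<le> \<bar>T\<bar> * norm (\<Sum>k=m..<n. g k)"
        by (metis abs_ge_self abs_mult real_norm_def)
      also have "\<dots> \<le> \<bar>T\<bar> * (\<epsilon> / (2 * (\<bar>T\<bar> + 1)))"
        using N[OF \<open>N \<le> m\<close>, of n] by (intro mult_left_mono) auto
      also have "\<dots> < \<epsilon> / 2"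
        using \<open>\<epsilon> > 0\<close> by (simp add: divide_simps)
      finally have g_part: "T * (\<Sum>k=m..<n. g k) < \<epsilon> / 2" .
      have h_part: "c * (\<Sum>k=m..<n. h x k) \<le> c * B"
        using h_bounded[OF \<open>x \<in> S\<close>] \<open>c > 0\<close> by (intro mult_left_mono) auto
      have "norm (\<Sum>k=m..<n. f k x) \<le> (\<Sum>k=m..<n. T * g k + c * h x k)"
        using T[OF \<open>x \<in> S\<close>] by (intro order_trans[OF norm_sum sum_mono])
      also have "\<dots> = T * (\<Sum>k=m..<n. g k) + c * (\<Sum>k=m..<n. h x k)"
        by (simp add: sum.distrib sum_distrib_left)
      finally show ?thesis
        using g_part h_part \<open>c * B < \<epsilon> / 2\<close> by linarith
    qed
    then show "\<exists>N. \<forall>m n x. N \<le> m \<longrightarrow> m \<le> n \<longrightarrow> x \<in> S \<longrightarrow> norm (\<Sum>k=m..<n. f k x) < \<epsilon>"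
      by blast
  qed
qed

lemma continuous_on_coordinate_power_sum:
  fixes a :: "nat \<Rightarrow> 'a::real_normed_field"
  shows "continuous_on S (\<lambda>x. \<Sum>j<n. a j * x j ^ d)"
proof -
  have "continuous_on S (\<lambda>x. x j)" for j
    by (rule continuous_on_subset[OF continuous_on_product_coordinates]) simp
  then show ?thesis
    by (intro continuous_intros)
qed

lemma uniform_limit_coordinate_power_series_Xball_infinity:
  fixes a :: "nat \<Rightarrow> 'a::{real_normed_field,banach}"
  assumes "in_lq 1 a"
  shows "uniform_limit (Xball \<infinity> M) (\<lambda>n x. \<Sum>j<n. a j * x j ^ d) (\<lambda>x. \<Sum>j. a j * x j ^ d)
           sequentially"
proof (rule Weierstrass_m_test)
  show "summable (\<lambda>j. M ^ d * norm (a j))"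
    using assms by (simp add: in_lq_def summable_mult)
next
  fix j and x :: "nat \<Rightarrow> 'a"
  assume "x \<in> Xball \<infinity> M"
  then have "norm (x j) \<le> M"
    using norm_le_lq_norm[of \<infinity> x j] by (auto simp: Xball_def)
  then have "norm (x j) ^ d \<le> M ^ d"
    by (intro power_mono) auto
  then have "norm (a j) * norm (x j) ^ d \<le> norm (a j) * M ^ d"
    by (rule mult_left_mono) simp
  then show "norm (a j * x j ^ d) \<le> M ^ d * norm (a j)"
    by (simp add: norm_mult norm_power mult.commute)
qed

lemma uniform_limit_coordinate_power_series_Xball_real:
  fixes a :: "nat \<Rightarrow> 'a::{real_normed_field,banach}"
  assumes "0 < d" and "real d < Q" and "in_lq (ereal (Q / (Q - d))) a"
  shows "uniform_limit (Xball (ereal Q) M) (\<lambda>n x. \<Sum>j<n. a j * x j ^ d) (\<lambda>x. \<Sum>j. a j * x j ^ d)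
           sequentially"
proof (rule uniform_limit_suminf_dominated)
  show "summable (\<lambda>j. norm (a j) powr (Q / (Q - d)))"
    using assms(3) by (simp add: in_lq_def)
next
  fix x :: "nat \<Rightarrow> 'a" and m n
  assume "x \<in> Xball (ereal Q) M"
  then have x: "in_lq (ereal Q) x" "lq_norm (ereal Q) x \<le> M"
    by (simp_all add: Xball_def)
  have "0 < Q"
    using assms(1,2) by linarith
  have "(\<Sum>k=m..<n. norm (x k) powr Q) \<le> (\<Sum>k. norm (x k) powr Q)"
    using x(1) by (intro sum_le_suminf) (auto simp: in_lq_def)
  also have "\<dots> = lq_norm (ereal Q) x powr Q"
    using \<open>0 < Q\<close> x(1) by (rule suminf_powr_eq_lq_norm_powr)
  also have "\<dots> \<le> M powr Q"
    using x \<open>0 < Q\<close> order_trans[OF norm_ge_zero norm_le_lq_norm[of "ereal Q" x 0]]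
    by (intro powr_mono2) auto
  finally show "(\<Sum>k=m..<n. norm (x k) powr Q) \<le> M powr Q" .
next
  fix c :: real
  assume "0 < c"
  show "\<exists>T. \<forall>x\<in>Xball (ereal Q) M. \<forall>k. norm (a k * x k ^ d)
                 \<le> T * norm (a k) powr (Q / (Q - d)) + c * norm (x k) powr Q"
  proof (intro exI ballI allI)
    fix x :: "nat \<Rightarrow> 'a" and k
    have "norm (a k * x k ^ d) \<le> c * norm (x k) powr Q
            + c powr (- real d / (Q - d)) * norm (a k) powr (Q / (Q - d))"
      unfolding norm_mult norm_power
      by (rule mult_power_le_Young[OF norm_ge_zero norm_ge_zero \<open>0 < c\<close> assms(1,2)])
    then show "norm (a k * x k ^ d) \<le> c powr (- real d / (Q - d)) * norm (a k) powr (Q / (Q - d))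
                 + c * norm (x k) powr Q"
      by linarith
  qed
qed

lemma continuous_on_coordinate_power_series_Xball:
  fixes a :: "nat \<Rightarrow> 'a::{real_normed_field,banach}"
  assumes "0 < d" and "ereal (real d) < q" and "in_lq (conj_exp d q) a"
  shows "continuous_on (Xball q M) (\<lambda>x. \<Sum>j. a j * x j ^ d)"
proof (rule uniform_limit_theorem)
  show "\<forall>\<^sub>F n in sequentially. continuous_on (Xball q M) (\<lambda>x. \<Sum>j<n. a j * x j ^ d)"
    by (intro always_eventually allI continuous_on_coordinate_power_sum)
  show "uniform_limit (Xball q M) (\<lambda>n x. \<Sum>j<n. a j * x j ^ d) (\<lambda>x. \<Sum>j. a j * x j ^ d)
          sequentially"
  proof (cases q)
    case (real Q)
    with assms have "real d < Q" and "in_lq (ereal (Q / (Q - d))) a"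
      by (simp_all add: conj_exp_def)
    with real show ?thesis
      using uniform_limit_coordinate_power_series_Xball_real[OF assms(1)] by simp
  next
    case PInf
    with assms show ?thesis
      by (simp add: conj_exp_def uniform_limit_coordinate_power_series_Xball_infinity)
  qed (use assms in simp)
qed simp

theorem lemma2:
  fixes d :: nat and q :: ereal and M :: real
    and a :: "nat \<Rightarrow> real" and b :: "nat \<Rightarrow> complex"
  assumes "d > 0" and "ereal (real d) < q" and "M > 0"
    and "in_lq (conj_exp d q) a" and "in_lq (conj_exp d q) b"
  shows "Xball q M \<subseteq> Omega M \<and>
         continuous_on (Xball q M :: (nat \<Rightarrow> real) set) (\<lambda>x. \<Sum>j. a j * x j ^ d) \<and>
         Xball q M \<subseteq> Omega M \<and>
         continuous_on (Xball q M :: (nat \<Rightarrow> complex) set) (\<lambda>x. \<Sum>j. b j * x j ^ d)"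
proof -
  \<comment> \<open>The argument works for every \<open>M\<close>.\<close>
  have "0 < q"
    using assms(1,2) by (cases q) auto
  then show ?thesis
    using continuous_on_coordinate_power_series_Xball[OF assms(1,2,4)]
      continuous_on_coordinate_power_series_Xball[OF assms(1,2,5)]
    by (simp add: Xball_subset_Omega)
qed

end
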